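(* Let $\Omega\subset\mathbb{R}^n$ be an open bounded connected domain. Assume there exists a web viscosity solution $u$ to the Dirichlet problem $$-\Delta_\infty u=1\ \text{in }\Omega,\qquad u=0\ \text{on }\partial\Omega.$$ Then $u=\phi_\Omega$, where $\phi_\Omega(x)=c_0\left[\rho_\Omega^{4/3}-(\rho_\Omega-d_{\partial\Omega}(x))^{4/3}\right]$ with $c_0=3^{4/3}/4$, and $\operatorname{Cut}(\Omega)=M(\Omega)$.
   Context: $d_{\partial\Omega}(x)=\min_{y\in\partial\Omega}|x-y|$; $\rho_\Omega=\max_{\overline\Omega}d_{\partial\Omega}$. $\Sigma(\Omega)$ is the set of points of $\Omega$ where $d_{\partial\Omega}$ is not differentiable; $\operatorname{Cut}(\Omega)=\overline{\Sigma(\Omega)}$; $M(\Omega)=\{x\in\overline\Omega:d_{\partial\Omega}(x)=\rho_\Omega\}$. A web function is a function of the form $u(x)=f(d_{\partial\Omega}(x))$ with $f:[0,\rho_\Omega]\to\mathbb{R}$ continuous. $\Delta_\infty\varphi=\langle D^2\varphi\,\nabla\varphi,\nabla\varphi\rangle$. A viscosity solution of the Dirichlet problem is $u\in C^0(\overline\Omega)$ with $u=0$ on $\partial\Omega$ such that: whenever $\varphi\in C^2(\Omega)$ and $\varphi-u$ has a local minimum at $x_0\in\Omega$, then $-\Delta_\infty\varphi(x_0)\le1$; and whenever $\varphi\in C^2(\Omega)$ and $\varphi-u$ has a local maximum at $x_0\in\Omega$, then $-\Delta_\infty\varphi(x_0)\ge1$. *)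

theory Defs
  imports "HOL-Analysis.Analysis"
begin

definition dist_bd :: "'a::euclidean_space set \<Rightarrow> 'a \<Rightarrow> real" where
  "dist_bd \<Omega> x = infdist x (frontier \<Omega>)"

definition inradius :: "'a::euclidean_space set \<Rightarrow> real" where
  "inradius \<Omega> = (SUP x\<in>closure \<Omega>. dist_bd \<Omega> x)"

definition singular_set :: "'a::euclidean_space set \<Rightarrow> 'a set" where
  "singular_set \<Omega> = {x\<in>\<Omega>. \<not> (dist_bd \<Omega> differentiable (at x))}"

definition cut_locus :: "'a::euclidean_space set \<Rightarrow> 'a set" where
  "cut_locus \<Omega> = closure (singular_set \<Omega>)"

definition high_ridge :: "'a::euclidean_space set \<Rightarrow> 'a set" where
  "high_ridge \<Omega> = {x\<in>closure \<Omega>. dist_bd \<Omega> x = inradius \<Omega>}"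

definition web_function :: "'a::euclidean_space set \<Rightarrow> ('a \<Rightarrow> real) \<Rightarrow> bool" where
  "web_function \<Omega> u \<longleftrightarrow>
     (\<exists>f. continuous_on {0..inradius \<Omega>} f \<and> (\<forall>x\<in>closure \<Omega>. u x = f (dist_bd \<Omega> x)))"

definition grad :: "('a::euclidean_space \<Rightarrow> real) \<Rightarrow> 'a \<Rightarrow> 'a" where
  "grad \<phi> x = (\<Sum>b\<in>Basis. frechet_derivative \<phi> (at x) b *\<^sub>R b)"

definition inf_laplacian :: "('a::euclidean_space \<Rightarrow> real) \<Rightarrow> 'a \<Rightarrow> real" where
  "inf_laplacian \<phi> x = frechet_derivative (grad \<phi>) (at x) (grad \<phi> x) \<bullet> grad \<phi> x"

definition C2_on :: "'a::euclidean_space set \<Rightarrow> ('a \<Rightarrow> real) \<Rightarrow> bool" where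
  "C2_on S \<phi> \<longleftrightarrow>
     (\<forall>x\<in>S. \<phi> differentiable (at x)) \<and>
     (\<forall>x\<in>S. grad \<phi> differentiable (at x)) \<and>
     (\<forall>h. continuous_on S (\<lambda>x. frechet_derivative (grad \<phi>) (at x) h))"

definition local_min_at :: "'a::euclidean_space set \<Rightarrow> ('a \<Rightarrow> real) \<Rightarrow> 'a \<Rightarrow> bool" where
  "local_min_at S g x0 \<longleftrightarrow> (\<exists>e>0. \<forall>y\<in>S \<inter> ball x0 e. g x0 \<le> g y)"

definition local_max_at :: "'a::euclidean_space set \<Rightarrow> ('a \<Rightarrow> real) \<Rightarrow> 'a \<Rightarrow> bool" where
  "local_max_at S g x0 \<longleftrightarrow> (\<exists>e>0. \<forall>y\<in>S \<inter> ball x0 e. g y \<le> g x0)"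

definition viscosity_solution :: "'a::euclidean_space set \<Rightarrow> ('a \<Rightarrow> real) \<Rightarrow> bool" where
  "viscosity_solution \<Omega> u \<longleftrightarrow>
     continuous_on (closure \<Omega>) u \<and> (\<forall>x\<in>frontier \<Omega>. u x = 0) \<and>
     (\<forall>\<phi> x0. C2_on \<Omega> \<phi> \<and> x0 \<in> \<Omega> \<and> local_min_at \<Omega> (\<lambda>x. \<phi> x - u x) x0
         \<longrightarrow> - inf_laplacian \<phi> x0 \<le> 1) \<and>
     (\<forall>\<phi> x0. C2_on \<Omega> \<phi> \<and> x0 \<in> \<Omega> \<and> local_max_at \<Omega> (\<lambda>x. \<phi> x - u x) x0
         \<longrightarrow> - inf_laplacian \<phi> x0 \<ge> 1)"

definition phi_Omega :: "'a::euclidean_space set \<Rightarrow> 'a \<Rightarrow> real" where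
  "phi_Omega \<Omega> x = (3 powr (4/3) / 4) *
     (inradius \<Omega> powr (4/3) - (inradius \<Omega> - dist_bd \<Omega> x) powr (4/3))"

end

theory Submission
  imports Defs
begin

text \<open>Let \<open>u = f \<circ> d\<close>. Near a point of the segment joining a nearest boundary point to a point of
  maximal distance, \<open>d\<close> is squeezed between paraboloids tangent to its level sets. Composing a
  quadratic in \<open>d\<close> with these paraboloids gives \<open>C\<^sup>2\<close> test functions, so \<open>f\<close> is a viscosity
  solution of the one-dimensional equation \<open>- f'\<^sup>2 f'' = 1\<close> on \<open>(0, \<rho>)\<close> with \<open>f 0 = 0\<close> and without
  interior local minima. Hence \<open>f\<close> is increasing and concave, and comparison with the explicit
  solutions \<open>l c0 (C\<^bsup>4/3\<^esup> - (C - s)\<^bsup>4/3\<^esup>)\<close>, for \<open>l \<rightarrow> 1\<close> and \<open>C \<rightarrow> \<rho>\<close> from either side,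
  identifies \<open>f\<close>.

  For the cut locus: where \<open>d = \<rho>\<close>, \<open>d\<close> has a maximum yet grows with unit slope along the normal,
  so it is not differentiable. Where \<open>d < \<rho>\<close> the profile lies below a tangent line of positive
  slope; two distinct nearest boundary points would then allow a test function touching \<open>u\<close> from
  above whose infinity-Laplacian is as negative as we like, so the nearest point is unique and \<open>d\<close>
  is differentiable there.\<close>

lemma grad_eqI:
  fixes \<phi> :: "'a::euclidean_space \<Rightarrow> real"
  assumes "(\<phi> has_derivative (\<lambda>v. G \<bullet> v)) (at x)"
  shows "grad \<phi> x = G"
proof -
  have "frechet_derivative \<phi> (at x) = (\<lambda>v. G \<bullet> v)"
    using frechet_derivative_at[OF assms] by simp
  then show ?thesis by (simp add: grad_def euclidean_representation)
qed

lemma C2_on_inf_laplacianI: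
  fixes \<phi> :: "'a::euclidean_space \<Rightarrow> real"
  assumes \<phi>: "\<And>x. (\<phi> has_derivative (\<lambda>v. G x \<bullet> v)) (at x)"
    and G: "\<And>x. (G has_derivative H x) (at x)"
    and H: "\<And>v. continuous_on S (\<lambda>x. H x v)"
  shows "C2_on S \<phi>" and "inf_laplacian \<phi> x = H x (G x) \<bullet> G x"
proof -
  have grad: "grad \<phi> = G" using grad_eqI[OF \<phi>] by auto
  have hess: "frechet_derivative G (at x) = H x" for x
    using frechet_derivative_at[OF G] by simp
  show "C2_on S \<phi>" unfolding C2_on_def grad hess
    using \<phi> G H unfolding differentiable_def by blast
  show "inf_laplacian \<phi> x = H x (G x) \<bullet> G x" unfolding inf_laplacian_def grad hess ..
qed

lemma C2_on_const: "C2_on S (\<lambda>x::'a::euclidean_space. c)"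
  and inf_laplacian_const: "inf_laplacian (\<lambda>x::'a::euclidean_space. c) x = 0"
  using C2_on_inf_laplacianI[of "\<lambda>x. c" "\<lambda>x. 0" "\<lambda>x v. 0"] by simp_all

lemma inf_laplacian_quadratic_profile:
  fixes M :: "'a::euclidean_space \<Rightarrow> 'a" and p a :: 'a and A B C :: real
  assumes M: "bounded_linear M" and M_sym: "\<And>v w. M v \<bullet> w = v \<bullet> M w"
  defines "\<psi> \<equiv> \<lambda>x. p \<bullet> (x - a) + (x - a) \<bullet> M (x - a) / 2"
  defines "\<phi> \<equiv> \<lambda>x. A + B * \<psi> x + C * (\<psi> x)\<^sup>2"
  shows "C2_on S \<phi>" and "\<psi> a = 0" and "(\<psi> \<longlongrightarrow> 0) (at a within T)"
    and "inf_laplacian \<phi> a = 2 * C * B\<^sup>2 * (p \<bullet> p)\<^sup>2 + B ^ 3 * (M p \<bullet> p)"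
proof -
  interpret M: bounded_linear M by (rule M)
  have M_swap: "v \<bullet> M w = w \<bullet> M v" for v w by (metis M_sym inner_commute)
  define G\<psi> where "G\<psi> x = p + M (x - a)" for x
  define G where "G x = (B + 2 * C * \<psi> x) *\<^sub>R G\<psi> x" for x
  define H where "H x v = (2 * C * (G\<psi> x \<bullet> v)) *\<^sub>R G\<psi> x + (B + 2 * C * \<psi> x) *\<^sub>R M v" for x v
  have d\<psi>: "(\<psi> has_derivative (\<lambda>v. G\<psi> x \<bullet> v)) (at x)" for x
    unfolding \<psi>_def G\<psi>_def
    by (rule derivative_eq_intros M.has_derivative refl | simp)+
      (simp add: fun_eq_iff M_sym M_swap[of x] M_swap[of a] M.diff inner_add_right
          inner_diff_right inner_commute)
  have dG\<psi>: "(G\<psi> has_derivative M) (at x)" for x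
    unfolding G\<psi>_def by (rule derivative_eq_intros M.has_derivative refl | simp)+
  have d\<phi>: "(\<phi> has_derivative (\<lambda>v. G x \<bullet> v)) (at x)" for x
    unfolding \<phi>_def G_def
    by (rule derivative_eq_intros d\<psi> refl | simp)+
      (auto simp: algebra_simps power2_eq_square)
  have dG: "(G has_derivative H x) (at x)" for x
    unfolding G_def H_def
    by (rule derivative_eq_intros d\<psi> dG\<psi> refl | simp)+ (auto simp: algebra_simps)
  have cH: "continuous_on S (\<lambda>x. H x v)" for v
    unfolding H_def G\<psi>_def \<psi>_def by (intro continuous_intros M.continuous_on) auto
  show "C2_on S \<phi>" by (rule C2_on_inf_laplacianI(1)[OF d\<phi> dG cH])
  show \<psi>0: "\<psi> a = 0" unfolding \<psi>_def by simp
  have "(\<psi> \<longlongrightarrow> \<psi> a) (at a within T)"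
    unfolding \<psi>_def by (intro tendsto_intros M.tendsto) auto
  then show "(\<psi> \<longlongrightarrow> 0) (at a within T)" unfolding \<psi>0 .
  have "inf_laplacian \<phi> a = H a (G a) \<bullet> G a" by (rule C2_on_inf_laplacianI(2)[OF d\<phi> dG cH])
  also have "\<dots> = 2 * C * B\<^sup>2 * (p \<bullet> p)\<^sup>2 + B ^ 3 * (M p \<bullet> p)"
    unfolding H_def G_def G\<psi>_def \<psi>0
    by (simp add: M.scaleR algebra_simps power2_eq_square power3_eq_cube)
  finally show "inf_laplacian \<phi> a = 2 * C * B\<^sup>2 * (p \<bullet> p)\<^sup>2 + B ^ 3 * (M p \<bullet> p)" .
qed

lemma local_min_atI:
  assumes "\<forall>\<^sub>F x in at x0 within S. g x0 \<le> g x"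
  shows "local_min_at S g x0"
proof -
  obtain r where "0 < r" "\<And>x. x \<in> S \<Longrightarrow> x \<noteq> x0 \<Longrightarrow> dist x x0 < r \<Longrightarrow> g x0 \<le> g x"
    using assms unfolding eventually_at by blast
  then show ?thesis unfolding local_min_at_def by (metis IntE dist_commute mem_ball order_refl)
qed

lemma local_max_atI:
  assumes "\<forall>\<^sub>F x in at x0 within S. g x \<le> g x0"
  shows "local_max_at S g x0"
proof -
  obtain r where "0 < r" "\<And>x. x \<in> S \<Longrightarrow> x \<noteq> x0 \<Longrightarrow> dist x x0 < r \<Longrightarrow> g x \<le> g x0"
    using assms unfolding eventually_at by blast
  then show ?thesis unfolding local_max_at_def by (metis IntE dist_commute mem_ball order_refl)
qed

lemma quadratic_mono:
  fixes a b B C :: real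
  assumes "\<bar>C\<bar> * (\<bar>a\<bar> + \<bar>b\<bar>) \<le> B" and "a \<le> b"
  shows "B * a + C * a\<^sup>2 \<le> B * b + C * b\<^sup>2"
proof -
  have "\<bar>C\<bar> * \<bar>a + b\<bar> \<le> \<bar>C\<bar> * (\<bar>a\<bar> + \<bar>b\<bar>)"
    by (intro mult_left_mono abs_triangle_ineq) simp
  then have "\<bar>C * (a + b)\<bar> \<le> B" using assms(1) by (simp add: abs_mult)
  then have "0 \<le> (b - a) * (B + C * (a + b))" using assms(2) by simp
  then show ?thesis by (simp add: power2_eq_square algebra_simps)
qed

lemma min_le_weighted_mean: "min (q1::real) q2 \<le> 3/4 * q1 + 1/4 * q2 - \<bar>q1 - q2\<bar> / 4"
  by (simp add: min_def abs_if field_simps)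

lemma eventually_at_within_mem: "\<forall>\<^sub>F x in at x0 within S. x \<in> S"
  by (simp add: eventually_at_filter)

lemma eventually_at_norm_diff_less:
  fixes x :: "'a::real_normed_vector"
  assumes "0 < r" shows "\<forall>\<^sub>F z in at x within S. norm (z - x) < r"
  unfolding eventually_at dist_norm using assms by blast

definition perp_proj :: "'a::real_inner \<Rightarrow> 'a \<Rightarrow> 'a" where
  "perp_proj e v = v - (e \<bullet> v) *\<^sub>R e"

lemma bounded_linear_perp_proj: "bounded_linear (perp_proj e)"
  unfolding perp_proj_def by (intro bounded_linear_intros)

lemma bounded_linear_scaled_perp_proj: "bounded_linear (\<lambda>v. c *\<^sub>R perp_proj e v)"
  by (intro bounded_linear_intros bounded_linear_perp_proj)

lemma perp_proj_inner_commute: "perp_proj e v \<bullet> w = v \<bullet> perp_proj e w"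
  by (simp add: perp_proj_def inner_diff_left inner_diff_right inner_commute)

lemma perp_proj_self: "e \<bullet> e = 1 \<Longrightarrow> perp_proj e e = 0"
  by (simp add: perp_proj_def)

lemma inner_perp_proj: "w \<bullet> perp_proj e w = w \<bullet> w - (e \<bullet> w)\<^sup>2"
  by (simp add: perp_proj_def inner_diff_right inner_commute power2_eq_square)

lemma inner_perp_proj_nonneg:
  assumes "norm e = 1" shows "0 \<le> w \<bullet> perp_proj e w"
proof -
  have "\<bar>e \<bullet> w\<bar> \<le> norm w" using Cauchy_Schwarz_ineq2[of e w] assms by simp
  then have "(e \<bullet> w)\<^sup>2 \<le> (norm w)\<^sup>2" by (metis abs_ge_zero power2_abs power_mono)
  then show ?thesis by (simp add: inner_perp_proj power2_norm_eq_inner)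
qed

text \<open>A sphere of radius \<open>c\<close> lies below its osculating paraboloid near the pole \<open>c e\<close>.\<close>
lemma norm_scaleR_unit_add_le:
  fixes e w :: "'a::real_inner"
  assumes e: "norm e = 1" and c: "0 < c" and w: "norm w \<le> c/2"
  shows "norm (c *\<^sub>R e + w) \<le> c + e \<bullet> w + (w \<bullet> perp_proj e w) / c"
proof -
  define a where "a = c + e \<bullet> w"
  define \<beta> where "\<beta> = w \<bullet> perp_proj e w"
  have "\<bar>e \<bullet> w\<bar> \<le> norm w" using Cauchy_Schwarz_ineq2[of e w] e by simp
  then have a: "c/2 \<le> a" using w unfolding a_def by linarith
  have \<beta>: "0 \<le> \<beta>" unfolding \<beta>_def using inner_perp_proj_nonneg[OF e] .
  have "(c *\<^sub>R e + w) \<bullet> (c *\<^sub>R e + w) = a\<^sup>2 + \<beta>"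
    using e unfolding a_def \<beta>_def inner_perp_proj
    by (simp add: norm_eq_1 inner_add_left inner_add_right inner_commute power2_eq_square algebra_simps)
  also have "\<dots> \<le> (a + \<beta>/(2*a))\<^sup>2" using a c \<beta> by (simp add: power2_eq_square field_simps)
  also have "\<dots> \<le> (a + \<beta>/c)\<^sup>2"
    using a c \<beta> by (intro power_mono add_left_mono divide_left_mono) auto
  finally show ?thesis
    using a c \<beta> norm_le_square unfolding a_def \<beta>_def by fastforce
qed

section \<open>The distance to the boundary\<close>

locale bounded_domain =
  fixes \<Omega> :: "'a::euclidean_space set"
  assumes open_domain: "open \<Omega>" and bounded_domain: "bounded \<Omega>" and domain_nonempty: "\<Omega> \<noteq> {}"
begin

abbreviation "d \<equiv> dist_bd \<Omega>"
abbreviation "\<rho> \<equiv> inradius \<Omega>"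

lemma frontier_nonempty: "frontier \<Omega> \<noteq> {}"
  using domain_nonempty bounded_domain frontier_eq_empty not_bounded_UNIV by blast

lemma dist_bd_nonneg: "0 \<le> d x"
  by (simp add: dist_bd_def infdist_nonneg)

lemma dist_bd_le_dist: "y \<in> frontier \<Omega> \<Longrightarrow> d x \<le> dist x y"
  by (simp add: dist_bd_def infdist_le)

lemma dist_bd_triangle: "d x \<le> d z + dist x z"
  by (simp add: dist_bd_def infdist_triangle)

lemma dist_bd_frontier: "y \<in> frontier \<Omega> \<Longrightarrow> d y = 0"
  by (simp add: dist_bd_def)

lemma continuous_on_dist_bd: "continuous_on S d"
  unfolding dist_bd_def by (intro continuous_intros)

lemma tendsto_dist_bd: "(d \<longlongrightarrow> d x) (at x within S)"
  unfolding dist_bd_def by (intro tendsto_intros)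

lemma dist_bd_pos: "x \<in> \<Omega> \<Longrightarrow> 0 < d x"
  using infdist_pos_not_in_closed[OF frontier_closed frontier_nonempty, of x] open_domain
  by (simp add: dist_bd_def frontier_def interior_open)

lemma in_domain_if_dist_bd_pos: "x \<in> closure \<Omega> \<Longrightarrow> 0 < d x \<Longrightarrow> x \<in> \<Omega>"
  using closure_Un_frontier dist_bd_frontier by fastforce

lemma nearest_frontier_point:
  obtains y where "y \<in> frontier \<Omega>" "dist x y = d x"
  using infdist_attains_inf[OF frontier_closed frontier_nonempty, of x]
  unfolding dist_bd_def by metis

lemma ball_dist_bd_subset:
  assumes "x \<in> \<Omega>" shows "ball x (d x) \<subseteq> \<Omega>"
proof
  fix z assume z: "z \<in> ball x (d x)"
  show "z \<in> \<Omega>"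
  proof (rule ccontr)
    assume "z \<notin> \<Omega>"
    then obtain b where b: "b \<in> closed_segment x z" "b \<in> frontier \<Omega>"
      using connected_Int_frontier[of "closed_segment x z" \<Omega>] assms by auto
    then have "d x \<le> dist x z"
      using dist_bd_le_dist[OF b(2), of x] dist_in_closed_segment[OF b(1)]
      by (metis dist_commute order_trans)
    with z show False by simp
  qed
qed

lemma inradius_attained: obtains x where "x \<in> \<Omega>" "d x = \<rho>"
  and "\<And>z. z \<in> closure \<Omega> \<Longrightarrow> d z \<le> \<rho>"
proof -
  obtain x where x: "x \<in> closure \<Omega>" "\<And>z. z \<in> closure \<Omega> \<Longrightarrow> d z \<le> d x"
    using continuous_attains_sup[OF compact_closure[THEN iffD2, OF bounded_domain] _ continuous_on_dist_bd]
      domain_nonempty by (metis closure_eq_empty)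
  have "\<rho> = d x" unfolding inradius_def by (rule cSup_eq_maximum) (use x in auto)
  moreover obtain z where "z \<in> \<Omega>" using domain_nonempty by blast
  ultimately have "0 < d x" using x(2) dist_bd_pos closure_subset by force
  with x \<open>\<rho> = d x\<close> show ?thesis using that in_domain_if_dist_bd_pos by auto
qed

lemma dist_bd_le_inradius: "x \<in> closure \<Omega> \<Longrightarrow> d x \<le> \<rho>"
  using inradius_attained by metis

lemma inradius_pos: "0 < \<rho>"
  using inradius_attained dist_bd_pos by metis

lemma dist_bd_on_segment_to_nearest:
  assumes y: "y \<in> frontier \<Omega>" "dist x y = d x" and t: "0 \<le> t" "t \<le> 1"
  shows "d (y + t *\<^sub>R (x - y)) = t * d x"
proof -
  have upper: "d (y + t *\<^sub>R (x - y)) \<le> t * d x"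
    using dist_bd_le_dist[OF y(1), of "y + t *\<^sub>R (x - y)"] y(2) t by (simp add: dist_norm)
  have "x - (y + t *\<^sub>R (x - y)) = (1 - t) *\<^sub>R (x - y)" by (simp add: algebra_simps)
  then have "dist x (y + t *\<^sub>R (x - y)) = (1 - t) * d x"
    using y(2) t by (simp add: dist_norm)
  then show ?thesis
    using upper dist_bd_triangle[of x "y + t *\<^sub>R (x - y)"] by (simp add: algebra_simps)
qed

lemma inradius_segment:
  obtains y e where "y \<in> frontier \<Omega>" "norm e = 1"
    and "\<And>t. 0 \<le> t \<Longrightarrow> t \<le> \<rho> \<Longrightarrow> d (y + t *\<^sub>R e) = t"
    and "\<And>t. 0 < t \<Longrightarrow> t \<le> \<rho> \<Longrightarrow> y + t *\<^sub>R e \<in> \<Omega>"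
proof -
  obtain x where x: "x \<in> \<Omega>" "d x = \<rho>" using inradius_attained by metis
  obtain y where y: "y \<in> frontier \<Omega>" "dist x y = d x" using nearest_frontier_point by metis
  define e where "e = (1/\<rho>) *\<^sub>R (x - y)"
  have \<rho>: "0 < \<rho>" by (rule inradius_pos)
  have e: "norm e = 1" using x y \<rho> by (simp add: e_def dist_norm)
  have along: "y + t *\<^sub>R e = y + (t/\<rho>) *\<^sub>R (x - y)" for t by (simp add: e_def)
  have "d (y + t *\<^sub>R e) = t" if "0 \<le> t" "t \<le> \<rho>" for t
    using dist_bd_on_segment_to_nearest[OF y, of "t/\<rho>"] that x \<rho> by (simp add: along)
  moreover have "y + t *\<^sub>R e \<in> \<Omega>" if "0 < t" "t \<le> \<rho>" for t
  proof -
    have "x = y + \<rho> *\<^sub>R e" using \<rho> by (simp add: e_def)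
    then have "x - (y + t *\<^sub>R e) = (\<rho> - t) *\<^sub>R e" by (simp add: algebra_simps)
    then have "y + t *\<^sub>R e \<in> ball x (d x)" using x e that by (simp add: dist_norm)
    then show ?thesis using ball_dist_bd_subset[OF x(1)] by blast
  qed
  ultimately show ?thesis using that y e by blast
qed

lemma dist_bd_le_paraboloid:
  assumes "y \<in> frontier \<Omega>" "norm e = 1" "0 < c" "norm w \<le> c/2"
  shows "d (y + c *\<^sub>R e + w) \<le> c + e \<bullet> w + (w \<bullet> perp_proj e w) / c"
  using dist_bd_le_dist[OF assms(1), of "y + c *\<^sub>R e + w"] norm_scaleR_unit_add_le[OF assms(2-4)]
  by (simp add: dist_norm add.assoc)

lemma dist_bd_ge_paraboloid:
  assumes "norm e = 1" "0 < r" "norm w \<le> r/2"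
  shows "d (x + r *\<^sub>R e) - r + e \<bullet> w - (w \<bullet> perp_proj e w) / r \<le> d (x + w)"
proof -
  have "dist (x + r *\<^sub>R e) (x + w) = norm (r *\<^sub>R e + - w)" by (simp add: dist_norm)
  also have "\<dots> \<le> r - e \<bullet> w + (w \<bullet> perp_proj e w) / r"
    using norm_scaleR_unit_add_le[OF assms(1,2), of "- w"] assms(3) by (simp add: inner_perp_proj)
  finally show ?thesis using dist_bd_triangle[of "x + r *\<^sub>R e" "x + w"] by linarith
qed

lemma nearest_frontier_points_tendsto:
  assumes y: "y \<in> frontier \<Omega>" "dist x y = d x"
    and unique: "\<And>y'. y' \<in> frontier \<Omega> \<Longrightarrow> dist x y' = d x \<Longrightarrow> y' = y"
    and Y: "\<And>z. Y z \<in> frontier \<Omega> \<and> dist z (Y z) = d z"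
  shows "(Y \<longlongrightarrow> y) (at x)"
proof (rule tendstoI)
  fix \<eta> :: real assume \<eta>: "0 < \<eta>"
  define K where "K = frontier \<Omega> \<inter> {y'. \<eta> \<le> dist y' y}"
  show "\<forall>\<^sub>F z in at x. dist (Y z) y < \<eta>"
  proof (cases "K = {}")
    case True
    then show ?thesis
      using Y unfolding K_def by (intro always_eventually allI) (metis IntI empty_iff mem_Collect_eq not_le)
  next
    case False
    have "closed K" unfolding K_def by (intro closed_Int frontier_closed closed_Collect_le continuous_intros)
    then obtain k where k: "k \<in> K" "infdist x K = dist x k" using infdist_attains_inf False by blast
    have "d x \<noteq> dist x k" using unique[of k] k(1) \<eta> unfolding K_def by auto
    moreover have "d x \<le> dist x k" using dist_bd_le_dist k(1) unfolding K_def by blast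
    ultimately have gap: "d x < dist x k" by simp
    define \<delta> where "\<delta> = (dist x k - d x) / 2"
    have "0 < \<delta>" using gap unfolding \<delta>_def by simp
    then have "\<forall>\<^sub>F z in at x. dist z x < \<delta>" by (auto simp: eventually_at)
    then show ?thesis
    proof (rule eventually_mono)
      fix z assume z: "dist z x < \<delta>"
      show "dist (Y z) y < \<eta>"
      proof (rule ccontr)
        assume "\<not> dist (Y z) y < \<eta>"
        then have "Y z \<in> K" using Y unfolding K_def by simp
        then have "dist x k \<le> dist x (Y z)" using k(2) infdist_le by metis
        also have "\<dots> \<le> dist x z + d z" using dist_triangle[of x "Y z" z] Y by (simp add: dist_commute)
        also have "\<dots> \<le> d x + 2 * dist z x" using dist_bd_triangle[of z x] by (simp add: dist_commute)
        finally show False using z unfolding \<delta>_def by (simp add: field_simps)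
      qed
    qed
  qed
qed

lemma dist_bd_linearization_error:
  assumes x: "x \<in> \<Omega>" and y: "y \<in> frontier \<Omega>" "dist x y = d x"
    and y': "y' \<in> frontier \<Omega>" "dist z y' = d z" and near: "norm (z - x) \<le> d x / 2"
  defines "e \<equiv> (1 / d x) *\<^sub>R (x - y)" and "n \<equiv> (1 / norm (x - y')) *\<^sub>R (x - y')"
  shows "\<bar>d z - d x - e \<bullet> (z - x)\<bar> \<le> (norm (z - x) / d x + norm (n - e)) * norm (z - x)"
proof -
  define t where "t = d x"
  define w where "w = z - x"
  have t: "0 < t" unfolding t_def using dist_bd_pos[OF x] .
  have e: "norm e = 1" and xe: "x = y + t *\<^sub>R e"
    using y t unfolding e_def t_def by (simp_all add: dist_norm)
  have far: "t \<le> norm (x - y')" using dist_bd_le_dist[OF y'(1), of x] by (simp add: t_def dist_norm)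
  have "y + t *\<^sub>R e + w = z" using xe by (simp add: w_def)
  moreover have "norm w \<le> t / 2" using near by (simp add: w_def t_def)
  ultimately have "d z \<le> t + e \<bullet> w + (w \<bullet> perp_proj e w) / t"
    using dist_bd_le_paraboloid[OF y(1) e t, of w] by simp
  moreover have "w \<bullet> perp_proj e w \<le> norm w * norm w"
    by (simp add: inner_perp_proj flip: power2_eq_square power2_norm_eq_inner)
  then have "w \<bullet> perp_proj e w / t \<le> norm w / t * norm w"
    using t divide_right_mono by fastforce
  ultimately have upper: "d z - d x - e \<bullet> w \<le> norm w / t * norm w"
    by (simp add: t_def)
  have "x \<noteq> y'" using far t by auto
  then have "n \<bullet> (x - y') = norm (x - y')" and "norm n = 1"
    by (simp_all add: n_def power2_norm_eq_inner[symmetric] power2_eq_square)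
  \<comment> \<open>the supporting hyperplane of the ball around \<open>y'\<close> through \<open>x\<close>\<close>
  then have "norm (x - y') + n \<bullet> w \<le> norm (x - y' + w)"
    using Cauchy_Schwarz_ineq2[of n "x - y' + w"] by (simp add: inner_add_right)
  also have "\<dots> = d z" using y'(2) by (simp add: w_def dist_norm norm_minus_commute)
  finally have "t + n \<bullet> w \<le> d z" using far by linarith
  moreover have "- (norm (n - e) * norm w) \<le> (n - e) \<bullet> w"
    using Cauchy_Schwarz_ineq2[of "n - e" w] by linarith
  ultimately have lower: "- (norm (n - e) * norm w) \<le> d z - d x - e \<bullet> w"
    by (simp add: t_def inner_diff_left)
  have "0 \<le> norm (n - e) * norm w" "0 \<le> norm w / t * norm w" using t by simp_all
  then show ?thesis using upper lower unfolding abs_le_iff distrib_right w_def t_def by linarith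
qed

lemma dist_bd_has_derivative_if_unique_nearest:
  assumes x: "x \<in> \<Omega>" and y: "y \<in> frontier \<Omega>" "dist x y = d x"
    and unique: "\<And>y'. y' \<in> frontier \<Omega> \<Longrightarrow> dist x y' = d x \<Longrightarrow> y' = y"
  shows "(d has_derivative (\<lambda>v. ((1 / d x) *\<^sub>R (x - y)) \<bullet> v)) (at x)"
proof -
  define t where "t = d x"
  define e where "e = (1 / t) *\<^sub>R (x - y)"
  define Y where "Y z = (SOME y'. y' \<in> frontier \<Omega> \<and> dist z y' = d z)" for z
  define n where "n z = (1 / norm (x - Y z)) *\<^sub>R (x - Y z)" for z
  have t: "0 < t" unfolding t_def using dist_bd_pos[OF x] .
  have Y: "Y z \<in> frontier \<Omega> \<and> dist z (Y z) = d z" for z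
    unfolding Y_def by (rule someI_ex) (metis nearest_frontier_point)
  have "(n \<longlongrightarrow> (1 / norm (x - y)) *\<^sub>R (x - y)) (at x)"
    unfolding n_def using nearest_frontier_points_tendsto[OF y unique Y] y t
    by (intro tendsto_intros) (auto simp: t_def dist_norm)
  then have n_lim: "((\<lambda>z. norm (n z - e)) \<longlongrightarrow> 0) (at x)"
    using y unfolding e_def t_def by (simp add: dist_norm tendsto_norm_zero_iff LIM_zero)
  have "((\<lambda>z. norm (d z - d x - e \<bullet> (z - x)) / norm (z - x)) \<longlongrightarrow> 0) (at x)"
  proof (rule real_tendsto_sandwich[where f="\<lambda>_. 0" and h="\<lambda>z. norm (z - x) / t + norm (n z - e)"])
    have "\<forall>\<^sub>F z in at x. norm (z - x) < t / 2" using t by (intro eventually_at_norm_diff_less) simp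
    then show "\<forall>\<^sub>F z in at x. norm (d z - d x - e \<bullet> (z - x)) / norm (z - x)
        \<le> norm (z - x) / t + norm (n z - e)"
    proof (rule eventually_mono)
      fix z assume "norm (z - x) < t / 2"
      then have "\<bar>d z - d x - e \<bullet> (z - x)\<bar> \<le> (norm (z - x) / t + norm (n z - e)) * norm (z - x)"
        using dist_bd_linearization_error[OF x y, of "Y z" z] Y[of z] by (simp add: e_def n_def t_def)
      then show "norm (d z - d x - e \<bullet> (z - x)) / norm (z - x) \<le> norm (z - x) / t + norm (n z - e)"
        using t by (simp add: divide_le_eq)
    qed
    have "((\<lambda>z. norm (z - x) / t) \<longlongrightarrow> norm (x - x) / t) (at x)"
      using t by (intro tendsto_intros) simp
    then show "((\<lambda>z. norm (z - x) / t + norm (n z - e)) \<longlongrightarrow> 0) (at x)"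
      using tendsto_add[OF _ n_lim] by simp
  qed auto
  then show ?thesis
    unfolding has_derivative_iff_norm e_def t_def by (simp add: bounded_linear_inner_right)
qed

lemma dist_bd_not_differentiable_at_inradius:
  assumes x: "x \<in> \<Omega>" and dx: "d x = \<rho>"
  shows "\<not> d differentiable (at x)"
proof
  assume "d differentiable (at x)"
  then obtain D where D: "(d has_derivative D) (at x)" unfolding differentiable_def by blast
  obtain y where y: "y \<in> frontier \<Omega>" "dist x y = d x" using nearest_frontier_point by metis
  define v where "v = x - y"
  define g where "g s = d (x + s *\<^sub>R v)" for s
  have \<rho>: "0 < \<rho>" by (rule inradius_pos)
  have nv: "norm v = \<rho>" using y dx by (simp add: v_def dist_norm)
  have "((\<lambda>s. x + s *\<^sub>R v) has_derivative (\<lambda>s. s *\<^sub>R v)) (at 0)"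
    by (rule derivative_eq_intros refl | simp)+
  moreover have "(d has_derivative D) (at (x + 0 *\<^sub>R v))" using D by simp
  ultimately have "(g has_derivative (\<lambda>s. D (s *\<^sub>R v))) (at 0)"
    unfolding g_def by (rule has_derivative_compose)
  then have g': "(g has_real_derivative D v) (at 0)"
    by (rule has_derivative_imp_has_field_derivative)
      (simp add: linear_cmul[OF has_derivative_linear[OF D]])
  have "D v = 0"
  proof (rule DERIV_local_max[OF g' zero_less_one], intro allI impI)
    fix s :: real assume "\<bar>0 - s\<bar> < 1"
    then have "x + s *\<^sub>R v \<in> ball x (d x)" using nv dx \<rho> by (simp add: dist_norm)
    then have "x + s *\<^sub>R v \<in> closure \<Omega>" using ball_dist_bd_subset[OF x] closure_subset by blast
    then show "g s \<le> g 0" using dist_bd_le_inradius dx by (simp add: g_def)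
  qed
  \<comment> \<open>but \<open>g\<close> grows with slope \<open>\<rho>\<close> along the segment from the nearest boundary point \<open>y\<close>\<close>
  then have "((\<lambda>s. g s - \<rho> * s) has_real_derivative - \<rho>) (at 0)"
    using DERIV_diff[OF g' DERIV_cmult_Id[of \<rho>]] by simp
  moreover have "- \<rho> < 0" using \<rho> by simp
  ultimately obtain h0 where h0: "0 < h0"
    "\<And>h. 0 < h \<Longrightarrow> h < h0 \<Longrightarrow> g 0 - \<rho> * 0 < g (0 - h) - \<rho> * (0 - h)"
    using DERIV_neg_dec_left by blast
  define h where "h = min (h0/2) 1"
  have h: "0 < h" "h < h0" "h \<le> 1" unfolding h_def using h0 by auto
  have "x + (- h) *\<^sub>R v = y + (1 - h) *\<^sub>R (x - y)" by (simp add: v_def algebra_simps)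
  then have "g (- h) = (1 - h) * \<rho>"
    using dist_bd_on_segment_to_nearest[OF y, of "1 - h"] h dx by (simp add: g_def)
  then show False using h0(2)[OF h(1,2)] dx by (simp add: g_def algebra_simps)
qed

text \<open>Two distinct nearest boundary points give two paraboloid upper barriers for \<open>d\<close>; their
  minimum leaves room for a concave correction transversal to the difference of the normals.\<close>
lemma dist_bd_le_two_paraboloids:
  assumes y1: "y1 \<in> frontier \<Omega>" "x = y1 + t *\<^sub>R e1" "norm e1 = 1"
    and y2: "y2 \<in> frontier \<Omega>" "x = y2 + t *\<^sub>R e2" "norm e2 = 1"
    and t: "0 < t" and K: "0 < K" and w: "norm w \<le> t / 4" "norm w \<le> 1 / (16 * K)"
  shows "d (x + w) - t \<le> 3/4 * (e1 \<bullet> w + w \<bullet> perp_proj e1 w / t)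
    + 1/4 * (e2 \<bullet> w + w \<bullet> perp_proj e2 w / t) - K * ((e1 - e2) \<bullet> w)\<^sup>2"
proof -
  define q1 where "q1 = e1 \<bullet> w + w \<bullet> perp_proj e1 w / t"
  define q2 where "q2 = e2 \<bullet> w + w \<bullet> perp_proj e2 w / t"
  define vw where "vw = (e1 - e2) \<bullet> w"
  have "d (x + w) - t \<le> q1"
    using dist_bd_le_paraboloid[OF y1(1,3) t, of w] w t by (simp add: q1_def y1(2))
  moreover have "d (x + w) - t \<le> q2"
    using dist_bd_le_paraboloid[OF y2(1,3) t, of w] w t by (simp add: q2_def y2(2))
  ultimately have "d (x + w) - t \<le> 3/4 * q1 + 1/4 * q2 - \<bar>q1 - q2\<bar> / 4"
    using min_le_weighted_mean[of q1 q2] by linarith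
  moreover have "\<bar>vw\<bar> / 2 \<le> \<bar>q1 - q2\<bar>"
  proof -
    have diff: "q1 - q2 = vw * (1 - (e1 + e2) \<bullet> w / t)"
      using t by (simp add: q1_def q2_def vw_def inner_perp_proj inner_diff_left inner_add_left
          power2_eq_square field_simps)
    have "\<bar>(e1 + e2) \<bullet> w\<bar> \<le> norm (e1 + e2) * norm w" by (rule Cauchy_Schwarz_ineq2)
    also have "\<dots> \<le> 2 * norm w"
      using norm_triangle_ineq[of e1 e2] y1(3) y2(3) by (intro mult_right_mono) auto
    finally have "1/2 \<le> \<bar>1 - (e1 + e2) \<bullet> w / t\<bar>" using w(1) t by (simp add: abs_le_iff field_simps)
    then show ?thesis unfolding diff abs_mult using mult_left_mono[of _ _ "\<bar>vw\<bar>"] by force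
  qed
  moreover have "K * vw\<^sup>2 \<le> \<bar>vw\<bar> / 8"
  proof -
    have "\<bar>vw\<bar> \<le> norm (e1 - e2) * norm w" unfolding vw_def by (rule Cauchy_Schwarz_ineq2)
    also have "\<dots> \<le> 2 * (1 / (16 * K))"
      using norm_triangle_ineq4[of e1 e2] y1(3) y2(3) w(2) by (intro mult_mono) auto
    finally have "K * \<bar>vw\<bar> \<le> 1/8" using K by (simp add: field_simps)
    then have "K * \<bar>vw\<bar> * \<bar>vw\<bar> \<le> 1/8 * \<bar>vw\<bar>" by (intro mult_right_mono) auto
    then show ?thesis by (simp add: power2_eq_square abs_mult_self)
  qed
  ultimately have "d (x + w) - t \<le> 3/4 * q1 + 1/4 * q2 - K * vw\<^sup>2" by argo
  then show ?thesis unfolding q1_def q2_def vw_def .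
qed

lemma high_ridge_subset_singular_set: "high_ridge \<Omega> \<subseteq> singular_set \<Omega>"
proof
  fix x assume "x \<in> high_ridge \<Omega>"
  then have "x \<in> closure \<Omega>" "d x = \<rho>" by (auto simp: high_ridge_def)
  then have "x \<in> \<Omega>" using inradius_pos in_domain_if_dist_bd_pos by simp
  then show "x \<in> singular_set \<Omega>"
    using dist_bd_not_differentiable_at_inradius \<open>d x = \<rho>\<close> by (simp add: singular_set_def)
qed

lemma closed_high_ridge: "closed (high_ridge \<Omega>)"
proof -
  have "high_ridge \<Omega> = closure \<Omega> \<inter> {x. d x = \<rho>}" by (auto simp: high_ridge_def)
  moreover have "closed {x. d x = \<rho>}"
    by (intro closed_Collect_eq continuous_on_dist_bd continuous_on_const)
  ultimately show ?thesis by auto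
qed

lemma cut_locus_eq_high_ridge:
  assumes "singular_set \<Omega> \<subseteq> high_ridge \<Omega>" shows "cut_locus \<Omega> = high_ridge \<Omega>"
  using assms high_ridge_subset_singular_set closed_high_ridge
  by (simp add: cut_locus_def subset_antisym closure_closed)

end

section \<open>The one-dimensional problem\<close>

lemma second_order_upper_bound:
  fixes w w' :: "real \<Rightarrow> real"
  assumes w: "\<forall>\<^sub>F s in nhds t. (w has_real_derivative w' s) (at s)"
    and w': "(w' has_real_derivative w'') (at t)" and \<eta>: "0 < \<eta>"
  shows "\<forall>\<^sub>F s in nhds t. w s \<le> w t + w' t * (s - t) + (w'' + \<eta>) / 2 * (s - t)\<^sup>2"
proof -
  define D where "D s = w s - (w t + w' t * (s - t) + (w'' + \<eta>) / 2 * (s - t)\<^sup>2)" for s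
  define D' where "D' s = w' s - w' t - (w'' + \<eta>) * (s - t)" for s
  obtain \<delta>0 where \<delta>0: "0 < \<delta>0" "\<And>s. dist s t < \<delta>0 \<Longrightarrow> (w has_real_derivative w' s) (at s)"
    using w unfolding eventually_nhds_metric by blast
  have dD: "(D has_real_derivative D' s) (at s)" if "dist s t < \<delta>0" for s
    unfolding D_def D'_def
    by (rule derivative_eq_intros \<delta>0(2)[OF that] refl | simp)+
  have "(D' has_real_derivative w'' - (w'' + \<eta>)) (at t)"
    unfolding D'_def by (rule derivative_eq_intros w' refl | simp)+
  moreover have "w'' - (w'' + \<eta>) < 0" using \<eta> by simp
  ultimately obtain e1 e2 where e: "0 < e1" "0 < e2"
    and left: "\<And>h. 0 < h \<Longrightarrow> h < e1 \<Longrightarrow> D' t < D' (t - h)"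
    and right: "\<And>h. 0 < h \<Longrightarrow> h < e2 \<Longrightarrow> D' (t + h) < D' t"
    using DERIV_neg_dec_left DERIV_neg_dec_right by metis
  have "D s \<le> 0" if s: "dist s t < min \<delta>0 (min e1 e2)" for s
  proof (cases "s \<le> t")
    case True
    have "D s \<le> D t"
    proof (rule DERIV_nonneg_imp_nondecreasing[OF True])
      fix z assume "s \<le> z" "z \<le> t"
      then show "\<exists>y. (D has_real_derivative y) (at z) \<and> 0 \<le> y"
        using dD[of z] left[of "t - z"] s by (intro exI[of _ "D' z"], cases "z = t") (auto simp: dist_real_def D'_def)
    qed
    then show ?thesis by (simp add: D_def)
  next
    case False
    have "D s \<le> D t"
    proof (rule DERIV_nonpos_imp_nonincreasing[of t s D])
      show "t \<le> s" using False by simp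
      fix z assume "t \<le> z" "z \<le> s"
      then show "\<exists>y. (D has_real_derivative y) (at z) \<and> y \<le> 0"
        using dD[of z] right[of "z - t"] s by (intro exI[of _ "D' z"], cases "z = t") (auto simp: dist_real_def D'_def)
    qed
    then show ?thesis by (simp add: D_def)
  qed
  then have "\<forall>\<^sub>F s in nhds t. D s \<le> 0"
    unfolding eventually_nhds_metric using \<delta>0(1) e by (intro exI[of _ "min \<delta>0 (min e1 e2)"]) auto
  then show ?thesis by (rule eventually_mono) (simp add: D_def)
qed

lemma second_order_lower_bound:
  fixes w w' :: "real \<Rightarrow> real"
  assumes w: "\<forall>\<^sub>F s in nhds t. (w has_real_derivative w' s) (at s)"
    and w': "(w' has_real_derivative w'') (at t)" and \<eta>: "0 < \<eta>"
  shows "\<forall>\<^sub>F s in nhds t. w t + w' t * (s - t) + (w'' - \<eta>) / 2 * (s - t)\<^sup>2 \<le> w s"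
proof -
  have "\<forall>\<^sub>F s in nhds t. ((\<lambda>s. - w s) has_real_derivative - w' s) (at s)"
    using w by (rule eventually_mono) (rule derivative_intros)
  moreover have "((\<lambda>s. - w' s) has_real_derivative - w'') (at t)" using w' by (rule derivative_intros)
  ultimately have "\<forall>\<^sub>F s in nhds t. - w s \<le> - w t + - w' t * (s - t) + (- w'' + \<eta>) / 2 * (s - t)\<^sup>2"
    using \<eta> by (rule second_order_upper_bound)
  then show ?thesis by (rule eventually_mono) (simp add: algebra_simps diff_divide_distrib)
qed

definition c0 :: real where "c0 = 3 powr (4/3) / 4"

definition barrier :: "real \<Rightarrow> real \<Rightarrow> real \<Rightarrow> real" where
  "barrier l C s = l * c0 * (C powr (4/3) - (C - s) powr (4/3))"

definition barrier_deriv :: "real \<Rightarrow> real \<Rightarrow> real \<Rightarrow> real" where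
  "barrier_deriv l C s = l * c0 * (4/3) * (C - s) powr (1/3)"

definition barrier_deriv2 :: "real \<Rightarrow> real \<Rightarrow> real \<Rightarrow> real" where
  "barrier_deriv2 l C s = - l * c0 * (4/9) * (C - s) powr (-2/3)"

lemma c0_pos: "0 < c0"
  by (simp add: c0_def)

lemma c0_cube: "c0 ^ 3 = 81/64"
proof -
  have "(3 powr (4/3::real)) ^ 3 = 3 powr (4/3 * 3)"
    by (subst powr_realpow[symmetric]) (simp_all add: powr_powr)
  also have "\<dots> = 81" by (simp add: powr_realpow[symmetric])
  finally show ?thesis unfolding c0_def by (simp add: power_divide)
qed

lemma barrier_has_derivative: "s < C \<Longrightarrow> (barrier l C has_real_derivative barrier_deriv l C s) (at s)"
  unfolding barrier_def barrier_deriv_def by (rule DERIV_cong, (rule derivative_intros | simp)+)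

lemma barrier_deriv_has_derivative:
  "s < C \<Longrightarrow> (barrier_deriv l C has_real_derivative barrier_deriv2 l C s) (at s)"
  unfolding barrier_deriv_def barrier_deriv2_def by (rule DERIV_cong, (rule derivative_intros | simp)+)

lemma barrier_deriv_pos: "s < C \<Longrightarrow> 0 < l \<Longrightarrow> 0 < barrier_deriv l C s"
  by (simp add: barrier_deriv_def c0_pos)

lemma barrier_deriv2_neg: "s < C \<Longrightarrow> 0 < l \<Longrightarrow> barrier_deriv2 l C s < 0"
  by (simp add: barrier_deriv2_def c0_pos)

text \<open>The barriers solve \<open>- w'' w'\<^sup>2 = l\<^sup>3\<close>; this is what fixes \<open>c0\<close>.\<close>
lemma barrier_equation: "s < C \<Longrightarrow> - barrier_deriv2 l C s * (barrier_deriv l C s)\<^sup>2 = l ^ 3"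
proof -
  assume "s < C"
  then have "((C - s) powr (1/3))\<^sup>2 * (C - s) powr (-2/3) = 1"
    by (simp add: powr_realpow[symmetric] powr_powr powr_add[symmetric])
  moreover have "- barrier_deriv2 l C s * (barrier_deriv l C s)\<^sup>2
      = l ^ 3 * c0 ^ 3 * (64/81) * (((C - s) powr (1/3))\<^sup>2 * (C - s) powr (-2/3))"
    unfolding barrier_deriv_def barrier_deriv2_def by algebra
  ultimately have "- barrier_deriv2 l C s * (barrier_deriv l C s)\<^sup>2 = l ^ 3 * c0 ^ 3 * (64/81)"
    by simp
  then show ?thesis by (simp add: c0_cube)
qed

lemma barrier_zero: "barrier l C 0 = 0"
  by (simp add: barrier_def)

lemma continuous_on_barrier: "(\<And>s. s \<in> S \<Longrightarrow> s \<le> C) \<Longrightarrow> continuous_on S (barrier l C)"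
  unfolding barrier_def by (intro continuous_intros continuous_on_powr') auto

lemma eventually_barrier_has_derivative:
  "t < C \<Longrightarrow> \<forall>\<^sub>F s in nhds t. (barrier l C has_real_derivative barrier_deriv l C s) (at s)"
  using eventually_nhds_in_open[of "{..<C}" t] by (auto elim!: eventually_mono intro: barrier_has_derivative)

text \<open>Viscosity solutions of \<open>- f'\<^sup>2 f'' = 1\<close> on \<open>(0, \<rho>)\<close> tested by quadratics, with no interior
  local minimum (the supersolution test is only available away from \<open>\<rho>\<close>).\<close>
locale profile_solution =
  fixes f :: "real \<Rightarrow> real" and \<rho> :: real
  assumes length_pos: "0 < \<rho>" and continuous: "continuous_on {0..\<rho>} f" and zero: "f 0 = 0"
    and subsolution: "\<And>t0 B C. 0 < t0 \<Longrightarrow> t0 \<le> \<rho> \<Longrightarrow> 0 < B \<Longrightarrow>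
      \<forall>\<^sub>F s in nhds t0. s \<in> {0..\<rho>} \<longrightarrow> f s \<le> f t0 + B * (s - t0) + C * (s - t0)\<^sup>2 \<Longrightarrow>
      - (2 * C * B\<^sup>2) \<le> 1"
    and supersolution: "\<And>t0 B C. 0 < t0 \<Longrightarrow> t0 < \<rho> \<Longrightarrow> 0 < B \<Longrightarrow>
      \<forall>\<^sub>F s in nhds t0. s \<in> {0..\<rho>} \<longrightarrow> f t0 + B * (s - t0) + C * (s - t0)\<^sup>2 \<le> f s \<Longrightarrow>
      1 \<le> - (2 * C * B\<^sup>2)"
    and no_local_min: "\<And>t0. 0 < t0 \<Longrightarrow> t0 \<le> \<rho> \<Longrightarrow>
      \<forall>\<^sub>F s in nhds t0. s \<in> {0..\<rho>} \<longrightarrow> f t0 \<le> f s \<Longrightarrow> False"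
begin

lemma no_min_right_of:
  assumes "0 \<le> a" "a < m" "m \<le> \<rho>" and min: "\<forall>s\<in>{a..\<rho>}. f m \<le> f s"
  shows False
proof (rule no_local_min)
  show "0 < m" "m \<le> \<rho>" using assms by auto
  have "\<forall>\<^sub>F s in nhds m. s \<in> {a<..}" using \<open>a < m\<close> by (intro eventually_nhds_in_open) auto
  then show "\<forall>\<^sub>F s in nhds m. s \<in> {0..\<rho>} \<longrightarrow> f m \<le> f s"
    by (rule eventually_mono) (use min in auto)
qed

lemma profile_strict_mono:
  assumes "0 \<le> a" "a < b" "b \<le> \<rho>"
  shows "f a < f b"
proof -
  obtain m where m: "m \<in> {a..\<rho>}" "\<forall>s\<in>{a..\<rho>}. f m \<le> f s"
    using continuous_attains_inf[of "{a..\<rho>}" f] continuous_on_subset[OF continuous] assms by auto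
  then have "m = a" using no_min_right_of[of a m] assms by force
  show ?thesis
  proof (rule ccontr)
    assume "\<not> f a < f b"
    then have "\<forall>s\<in>{a..\<rho>}. f b \<le> f s" using m \<open>m = a\<close> by force
    then show False using no_min_right_of[of a b] assms by auto
  qed
qed

lemma no_convex_quadratic_below:
  assumes ab: "0 \<le> a" "a < m" "m < b" "b \<le> \<rho>" and \<epsilon>: "0 < \<epsilon>"
    and below: "\<And>s. s \<in> {a..b} \<Longrightarrow> f m + B * (s - m) + \<epsilon> * (s - m)\<^sup>2 \<le> f s"
  shows False
proof (cases "0 < B")
  case True
  have "\<forall>\<^sub>F s in nhds m. s \<in> {a<..<b}" using ab by (intro eventually_nhds_in_open) auto
  then have "1 \<le> - (2 * \<epsilon> * B\<^sup>2)"
    using ab True by (intro supersolution[of m B \<epsilon>]) (auto elim!: eventually_mono intro!: below)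
  moreover have "0 < 2 * \<epsilon> * B\<^sup>2" using \<epsilon> True by simp
  ultimately show False by linarith
next
  case False
  define s where "s = (a + m) / 2"
  have s: "s \<in> {a..b}" "a \<le> s" "s < m" using ab by (auto simp: s_def)
  have "0 \<le> B * (s - m)" using False s(3) by (intro mult_nonpos_nonpos) auto
  then have "f m \<le> f s" using below[OF s(1)] \<epsilon> by (smt (verit) mult_nonneg_nonneg zero_le_power2)
  moreover have "f s < f m" using profile_strict_mono[of s m] s ab by auto
  ultimately show False by simp
qed

text \<open>If \<open>f\<close> dipped below a chord, \<open>f\<close> minus a slightly convex parabola through the chord's
  endpoints would attain an interior minimum.\<close>
lemma profile_concave:
  assumes abt: "0 \<le> a" "a < t" "t < b" "b \<le> \<rho>"
  shows "f a + (f b - f a) * (t - a) / (b - a) \<le> f t"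
proof (rule ccontr)
  assume below: "\<not> ?thesis"
  define k where "k = (f b - f a) / (b - a)"
  define \<epsilon> where "\<epsilon> = (f a + k * (t - a) - f t) / (2 * ((t - a) * (b - t)))"
  define q where "q s = f a + k * (s - a) + \<epsilon> * (s - a) * (s - b)" for s
  have gap: "0 < f a + k * (t - a) - f t" using below by (simp add: k_def times_divide_eq_left)
  then have \<epsilon>: "0 < \<epsilon>" using abt unfolding \<epsilon>_def by simp
  have "\<epsilon> * ((t - a) * (b - t)) = (f a + k * (t - a) - f t) / 2"
    using abt unfolding \<epsilon>_def by simp
  moreover have "\<epsilon> * (t - a) * (t - b) = - (\<epsilon> * ((t - a) * (b - t)))" by (simp add: algebra_simps)
  ultimately have "f t < q t" using gap unfolding q_def by argo
  have qab: "q a = f a" "q b = f b" using abt by (simp_all add: q_def k_def)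
  have "continuous_on {a..b} (\<lambda>s. f s - q s)"
    unfolding q_def using abt by (intro continuous_intros continuous_on_subset[OF continuous]) auto
  then have "\<exists>m\<in>{a..b}. \<forall>s\<in>{a..b}. f m - q m \<le> f s - q s"
    using abt by (intro continuous_attains_inf) auto
  then obtain m where m: "m \<in> {a..b}" and min: "\<And>s. s \<in> {a..b} \<Longrightarrow> f m - q m \<le> f s - q s"
    by blast
  have "f m - q m < 0" using min[of t] \<open>f t < q t\<close> abt by simp
  then have "a < m" "m < b" using m qab by (auto simp: le_less)
  moreover have "f m + (k + \<epsilon> * (2 * m - a - b)) * (s - m) + \<epsilon> * (s - m)\<^sup>2 \<le> f s"
    if "s \<in> {a..b}" for s
    using min[OF that] by (simp add: q_def power2_eq_square algebra_simps)
  ultimately show False using no_convex_quadratic_below abt \<epsilon> by blast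
qed

lemma barrier_above_no_interior_touching:
  assumes l: "1 < l" and t: "0 < t" "t \<le> \<rho>" "t < C"
    and max: "\<And>s. s \<in> {0..\<rho>} \<Longrightarrow> f s - barrier l C s \<le> f t - barrier l C t"
  shows False
proof -
  define B where "B = barrier_deriv l C t"
  define \<eta> where "\<eta> = (l ^ 3 - 1) / (2 * B\<^sup>2)"
  have B: "0 < B" using barrier_deriv_pos t l by (simp add: B_def)
  have l3: "1 < l ^ 3" using l by (simp add: one_less_power)
  then have \<eta>: "0 < \<eta>" using B by (simp add: \<eta>_def)
  have "\<forall>\<^sub>F s in nhds t. barrier l C s
      \<le> barrier l C t + B * (s - t) + (barrier_deriv2 l C t + \<eta>) / 2 * (s - t)\<^sup>2"
    unfolding B_def using t \<eta>
    by (intro second_order_upper_bound eventually_barrier_has_derivative barrier_deriv_has_derivative)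
  then have "\<forall>\<^sub>F s in nhds t. s \<in> {0..\<rho>} \<longrightarrow>
      f s \<le> f t + B * (s - t) + (barrier_deriv2 l C t + \<eta>) / 2 * (s - t)\<^sup>2"
    by (rule eventually_mono) (use max in fastforce)
  then have "- (2 * ((barrier_deriv2 l C t + \<eta>) / 2) * B\<^sup>2) \<le> 1"
    by (rule subsolution[OF t(1,2) B])
  then have "- barrier_deriv2 l C t * B\<^sup>2 - \<eta> * B\<^sup>2 \<le> 1" by (simp add: algebra_simps)
  moreover have "- barrier_deriv2 l C t * B\<^sup>2 = l ^ 3" using barrier_equation t by (simp add: B_def)
  moreover have "\<eta> * B\<^sup>2 = (l ^ 3 - 1) / 2" using B by (simp add: \<eta>_def)
  ultimately show False using l3 by argo
qed

lemma profile_le_barrier: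
  assumes l: "1 < l" and C: "\<rho> < C" and s: "s \<in> {0..\<rho>}"
  shows "f s \<le> barrier l C s"
proof -
  have "continuous_on {0..\<rho>} (\<lambda>s. f s - barrier l C s)"
    using C by (intro continuous_intros continuous continuous_on_barrier) auto
  then have "\<exists>t\<in>{0..\<rho>}. \<forall>s\<in>{0..\<rho>}. f s - barrier l C s \<le> f t - barrier l C t"
    using length_pos by (intro continuous_attains_sup) auto
  then obtain t where t: "t \<in> {0..\<rho>}"
    and max: "\<And>s. s \<in> {0..\<rho>} \<Longrightarrow> f s - barrier l C s \<le> f t - barrier l C t"
    by blast
  have "t = 0" using barrier_above_no_interior_touching[OF l _ _ _ max] t C by force
  then show ?thesis using max[OF s] by (simp add: zero barrier_zero)
qed

lemma profile_increment_lower_bound: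
  assumes "0 \<le> s" "s < C" "C < \<tau>" "\<tau> \<le> \<rho>"
  shows "(f \<tau> - f C) * (C - s) \<le> (f C - f s) * (\<tau> - C)"
proof -
  have "f s + (f \<tau> - f s) * (C - s) / (\<tau> - s) \<le> f C" using profile_concave assms by auto
  then have "(f \<tau> - f s) * (C - s) \<le> (f C - f s) * (\<tau> - s)" using assms by (simp add: field_simps)
  then show ?thesis by (simp add: algebra_simps)
qed

lemma profile_not_flat_from_left:
  assumes C: "0 < C" "C < \<rho>"
    and flat: "\<And>s. 0 \<le> s \<Longrightarrow> s < C \<Longrightarrow> f C - f s \<le> K * (C - s) powr (4/3)"
  shows False
proof -
  define \<tau> where "\<tau> = (C + \<rho>) / 2"
  have \<tau>: "C < \<tau>" "\<tau> \<le> \<rho>" using C by (auto simp: \<tau>_def)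
  define m where "m = (f \<tau> - f C) / (\<tau> - C)"
  have m: "0 < m" using profile_strict_mono[of C \<tau>] C \<tau> by (simp add: m_def)
  have upper: "\<forall>\<^sub>F s in at_left C. m \<le> K * (C - s) powr (1/3)"
    using eventually_at_left_real[OF C(1)]
  proof eventually_elim
    case (elim s)
    then have "m * (C - s) \<le> f C - f s"
      using profile_increment_lower_bound[of s C \<tau>] \<tau> by (simp add: m_def field_simps)
    also have "\<dots> \<le> K * (C - s) powr (4/3)" using flat elim by simp
    also have "(C - s) powr (4/3) = (C - s) * (C - s) powr (1/3)"
      using powr_add[of "C - s" 1 "1/3"] elim by simp
    finally show ?case using elim by (simp add: mult.commute mult.left_commute)
  qed
  have "((\<lambda>s. C - s) \<longlongrightarrow> C - C) (at_left C)" by (intro tendsto_intros)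
  moreover have "\<forall>\<^sub>F s in at_left C. 0 \<le> C - s"
    using eventually_at_left_real[OF C(1)] by (rule eventually_mono) simp
  ultimately have "((\<lambda>s. (C - s) powr (1/3)) \<longlongrightarrow> 0) (at_left C)"
    by (intro tendsto_zero_powrI[OF _ tendsto_const]) simp_all
  then have "((\<lambda>s. K * (C - s) powr (1/3)) \<longlongrightarrow> K * 0) (at_left C)" by (intro tendsto_intros)
  then have "\<forall>\<^sub>F s in at_left C. K * (C - s) powr (1/3) < m" using m by (intro order_tendstoD(2)) auto
  with upper have "\<forall>\<^sub>F s in at_left C. False" by eventually_elim simp
  then show False by simp
qed

lemma barrier_below_no_interior_touching:
  assumes l: "0 < l" "l < 1" and t: "0 < t" "t < C" "C < \<rho>"
    and min: "\<And>s. s \<in> {0..C} \<Longrightarrow> f t - barrier l C t \<le> f s - barrier l C s"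
  shows False
proof -
  define B where "B = barrier_deriv l C t"
  define \<eta> where "\<eta> = (1 - l ^ 3) / (2 * B\<^sup>2)"
  have B: "0 < B" using barrier_deriv_pos t l by (simp add: B_def)
  have l3: "l ^ 3 < 1" using l power_strict_mono[of l 1 3] by simp
  then have \<eta>: "0 < \<eta>" using B by (simp add: \<eta>_def)
  have "\<forall>\<^sub>F s in nhds t. barrier l C t + B * (s - t) + (barrier_deriv2 l C t - \<eta>) / 2 * (s - t)\<^sup>2
      \<le> barrier l C s"
    unfolding B_def using t \<eta>
    by (intro second_order_lower_bound eventually_barrier_has_derivative barrier_deriv_has_derivative)
  moreover have "\<forall>\<^sub>F s in nhds t. s < C"
    using t by (intro eventually_nhds_in_open[of "{..<C}", simplified]) auto
  ultimately have "\<forall>\<^sub>F s in nhds t. s \<in> {0..\<rho>} \<longrightarrow>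
      f t + B * (s - t) + (barrier_deriv2 l C t - \<eta>) / 2 * (s - t)\<^sup>2 \<le> f s"
    by eventually_elim (use min in fastforce)
  then have "1 \<le> - (2 * ((barrier_deriv2 l C t - \<eta>) / 2) * B\<^sup>2)"
    using t B by (intro supersolution[of t B]) auto
  then have "1 \<le> - barrier_deriv2 l C t * B\<^sup>2 + \<eta> * B\<^sup>2" by (simp add: algebra_simps)
  moreover have "- barrier_deriv2 l C t * B\<^sup>2 = l ^ 3" using barrier_equation t by (simp add: B_def)
  moreover have "\<eta> * B\<^sup>2 = (1 - l ^ 3) / 2" using B by (simp add: \<eta>_def)
  ultimately show False using l3 by argo
qed

lemma barrier_le_profile:
  assumes l: "0 < l" "l < 1" and C: "0 < C" "C < \<rho>" and s: "s \<in> {0..C}"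
  shows "barrier l C s \<le> f s"
proof -
  have "continuous_on {0..C} (\<lambda>s. f s - barrier l C s)"
    using C by (intro continuous_intros continuous_on_subset[OF continuous] continuous_on_barrier) auto
  then have "\<exists>t\<in>{0..C}. \<forall>s\<in>{0..C}. f t - barrier l C t \<le> f s - barrier l C s"
    using C by (intro continuous_attains_inf) auto
  then obtain t where t: "t \<in> {0..C}"
    and min: "\<And>s. s \<in> {0..C} \<Longrightarrow> f t - barrier l C t \<le> f s - barrier l C s"
    by blast
  have "t \<noteq> C"
  proof
    assume "t = C"
    then have "f C - f s' \<le> l * c0 * (C - s') powr (4/3)" if "0 \<le> s'" "s' < C" for s'
      using min[of s'] that by (simp add: barrier_def algebra_simps)
    then show False using profile_not_flat_from_left C by blast
  qed
  then have "t = 0" using barrier_below_no_interior_touching[OF l _ _ C(2) min] t by force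
  then show ?thesis using min[OF s] by (simp add: zero barrier_zero)
qed

lemma profile_le_limit_barrier:
  assumes s: "s \<in> {0..\<rho>}" shows "f s \<le> barrier 1 \<rho> s"
proof (rule tendsto_lowerbound)
  have "\<forall>\<^sub>F h in at_right (0::real). 0 \<le> h" using eventually_at_right_less by (rule eventually_mono) simp
  then show "((\<lambda>h. barrier (1 + h) (\<rho> + h) s) \<longlongrightarrow> barrier 1 \<rho> s) (at_right 0)"
    unfolding barrier_def using s by (intro tendsto_eq_intros) (auto elim!: eventually_mono)
  show "\<forall>\<^sub>F h in at_right 0. f s \<le> barrier (1 + h) (\<rho> + h) s"
    using eventually_at_right_less by (rule eventually_mono) (use s in \<open>auto intro!: profile_le_barrier\<close>)
qed simp

lemma limit_barrier_le_profile:
  assumes s: "s \<in> {0..\<rho>}" shows "barrier 1 \<rho> s \<le> f s"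
proof -
  have below: "0 \<le> f s - barrier 1 \<rho> s" if s: "s \<in> {0..<\<rho>}" for s
  proof -
    have "barrier 1 \<rho> s \<le> f s"
    proof (rule tendsto_upperbound)
      have "\<forall>\<^sub>F h in at_right (0::real). 0 \<le> h" using eventually_at_right_less by (rule eventually_mono) simp
      then show "((\<lambda>h. barrier (1 - h) (\<rho> - h * (\<rho> - s)) s) \<longlongrightarrow> barrier 1 \<rho> s) (at_right 0)"
        unfolding barrier_def using s by (intro tendsto_eq_intros) (auto elim!: eventually_mono)
      show "\<forall>\<^sub>F h in at_right 0. barrier (1 - h) (\<rho> - h * (\<rho> - s)) s \<le> f s"
        using eventually_at_right_real[OF zero_less_one]
      proof (rule eventually_mono)
        fix h :: real assume h: "h \<in> {0<..<1}"
        then have "0 < (1 - h) * (\<rho> - s)" "0 < h * (\<rho> - s)" using s by auto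
        then show "barrier (1 - h) (\<rho> - h * (\<rho> - s)) s \<le> f s"
          using h s by (intro barrier_le_profile) (auto simp: algebra_simps)
      qed
    qed simp
    then show ?thesis by simp
  qed
  have "continuous_on (closure {0..<\<rho>}) (\<lambda>s. f s - barrier 1 \<rho> s)"
    using length_pos by (auto intro!: continuous_intros continuous continuous_on_barrier)
  moreover have "s \<in> closure {0..<\<rho>}" using s length_pos by simp
  ultimately show ?thesis using continuous_ge_on_closure[of "{0..<\<rho>}" _ s 0] below by fastforce
qed

lemma profile_eq_barrier: "s \<in> {0..\<rho>} \<Longrightarrow> f s = barrier 1 \<rho> s"
  using profile_le_limit_barrier limit_barrier_le_profile by (simp add: order_antisym)

end

section \<open>Web solutions\<close>

locale web_solution = bounded_domain +
  fixes u :: "'a \<Rightarrow> real" and f :: "real \<Rightarrow> real"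
  assumes u_eq_profile: "\<And>x. x \<in> closure \<Omega> \<Longrightarrow> u x = f (d x)"
    and viscosity: "viscosity_solution \<Omega> u"
begin

lemma viscosity_subsolution:
  "C2_on \<Omega> \<phi> \<Longrightarrow> x0 \<in> \<Omega> \<Longrightarrow> local_min_at \<Omega> (\<lambda>x. \<phi> x - u x) x0 \<Longrightarrow> - inf_laplacian \<phi> x0 \<le> 1"
  using viscosity unfolding viscosity_solution_def by blast

lemma viscosity_supersolution:
  "C2_on \<Omega> \<phi> \<Longrightarrow> x0 \<in> \<Omega> \<Longrightarrow> local_max_at \<Omega> (\<lambda>x. \<phi> x - u x) x0 \<Longrightarrow> 1 \<le> - inf_laplacian \<phi> x0"
  using viscosity unfolding viscosity_solution_def by blast

lemma profile_zero: "f 0 = 0"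
proof -
  obtain y where "y \<in> frontier \<Omega>" using frontier_nonempty by blast
  then show ?thesis
    using viscosity u_eq_profile[of y] dist_bd_frontier closure_Un_frontier
    unfolding viscosity_solution_def by force
qed

lemma eventually_profile:
  assumes x0: "x0 \<in> \<Omega>" and P: "\<forall>\<^sub>F s in nhds (d x0). s \<in> {0..\<rho>} \<longrightarrow> P s (f s)"
  shows "\<forall>\<^sub>F x in at x0 within \<Omega>. P (d x) (u x)"
proof -
  from P tendsto_dist_bd have "\<forall>\<^sub>F x in at x0 within \<Omega>. d x \<in> {0..\<rho>} \<longrightarrow> P (d x) (f (d x))"
    by (rule eventually_compose_filterlim)
  then show ?thesis using eventually_at_within_mem
  proof eventually_elim
    case (elim x)
    then have "x \<in> closure \<Omega>" using closure_subset by blast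
    then show ?case using elim dist_bd_nonneg dist_bd_le_inradius u_eq_profile by simp
  qed
qed

text \<open>A test function \<open>f t0 + B \<psi> + C \<psi>\<^sup>2\<close> built on a barrier \<open>\<psi>\<close> for \<open>d - t0\<close> touches \<open>u\<close>
  whenever the quadratic touches the profile \<open>f\<close> at \<open>t0\<close>, because the quadratic is increasing
  near \<open>t0\<close>.\<close>
lemma touching_from_above:
  assumes x0: "x0 \<in> \<Omega>" "d x0 = t0" and B: "0 < B"
    and \<psi>: "(\<psi> \<longlongrightarrow> 0) (at x0 within \<Omega>)" "\<psi> x0 = 0"
    and barrier: "\<forall>\<^sub>F x in at x0 within \<Omega>. d x - t0 \<le> \<psi> x"
    and touch: "\<forall>\<^sub>F s in nhds t0. s \<in> {0..\<rho>} \<longrightarrow> f s \<le> f t0 + B * (s - t0) + C * (s - t0)\<^sup>2"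
  shows "local_min_at \<Omega> (\<lambda>x. (f t0 + B * \<psi> x + C * (\<psi> x)\<^sup>2) - u x) x0"
proof (rule local_min_atI)
  have "((\<lambda>x. \<bar>C\<bar> * (\<bar>d x - t0\<bar> + \<bar>\<psi> x\<bar>)) \<longlongrightarrow> \<bar>C\<bar> * (\<bar>d x0 - t0\<bar> + \<bar>0\<bar>)) (at x0 within \<Omega>)"
    using tendsto_dist_bd \<psi>(1) by (intro tendsto_intros)
  then have "\<forall>\<^sub>F x in at x0 within \<Omega>. \<bar>C\<bar> * (\<bar>d x - t0\<bar> + \<bar>\<psi> x\<bar>) < B"
    using x0 \<psi>(2) B by (intro order_tendstoD(2)) auto
  moreover have "\<forall>\<^sub>F x in at x0 within \<Omega>. u x \<le> f t0 + B * (d x - t0) + C * (d x - t0)\<^sup>2"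
    using eventually_profile[OF x0(1), of "\<lambda>s v. v \<le> f t0 + B * (s - t0) + C * (s - t0)\<^sup>2"] touch x0
    by simp
  ultimately show "\<forall>\<^sub>F x in at x0 within \<Omega>.
      (f t0 + B * \<psi> x0 + C * (\<psi> x0)\<^sup>2) - u x0 \<le> (f t0 + B * \<psi> x + C * (\<psi> x)\<^sup>2) - u x"
    using barrier
  proof eventually_elim
    case (elim x)
    then have "B * (d x - t0) + C * (d x - t0)\<^sup>2 \<le> B * \<psi> x + C * (\<psi> x)\<^sup>2"
      by (intro quadratic_mono) auto
    moreover have "u x0 = f t0" using x0 u_eq_profile closure_subset by blast
    ultimately show ?case using elim \<psi>(2) by simp
  qed
qed

lemma touching_from_below:
  assumes x0: "x0 \<in> \<Omega>" "d x0 = t0" and B: "0 < B"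
    and \<psi>: "(\<psi> \<longlongrightarrow> 0) (at x0 within \<Omega>)" "\<psi> x0 = 0"
    and barrier: "\<forall>\<^sub>F x in at x0 within \<Omega>. \<psi> x \<le> d x - t0"
    and touch: "\<forall>\<^sub>F s in nhds t0. s \<in> {0..\<rho>} \<longrightarrow> f t0 + B * (s - t0) + C * (s - t0)\<^sup>2 \<le> f s"
  shows "local_max_at \<Omega> (\<lambda>x. (f t0 + B * \<psi> x + C * (\<psi> x)\<^sup>2) - u x) x0"
proof (rule local_max_atI)
  have "((\<lambda>x. \<bar>C\<bar> * (\<bar>\<psi> x\<bar> + \<bar>d x - t0\<bar>)) \<longlongrightarrow> \<bar>C\<bar> * (\<bar>0\<bar> + \<bar>d x0 - t0\<bar>)) (at x0 within \<Omega>)"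
    using tendsto_dist_bd \<psi>(1) by (intro tendsto_intros)
  then have "\<forall>\<^sub>F x in at x0 within \<Omega>. \<bar>C\<bar> * (\<bar>\<psi> x\<bar> + \<bar>d x - t0\<bar>) < B"
    using x0 \<psi>(2) B by (intro order_tendstoD(2)) auto
  moreover have "\<forall>\<^sub>F x in at x0 within \<Omega>. f t0 + B * (d x - t0) + C * (d x - t0)\<^sup>2 \<le> u x"
    using eventually_profile[OF x0(1), of "\<lambda>s v. f t0 + B * (s - t0) + C * (s - t0)\<^sup>2 \<le> v"] touch x0
    by simp
  ultimately show "\<forall>\<^sub>F x in at x0 within \<Omega>.
      (f t0 + B * \<psi> x + C * (\<psi> x)\<^sup>2) - u x \<le> (f t0 + B * \<psi> x0 + C * (\<psi> x0)\<^sup>2) - u x0"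
    using barrier
  proof eventually_elim
    case (elim x)
    then have "B * \<psi> x + C * (\<psi> x)\<^sup>2 \<le> B * (d x - t0) + C * (d x - t0)\<^sup>2"
      by (intro quadratic_mono) auto
    moreover have "u x0 = f t0" using x0 u_eq_profile closure_subset by blast
    ultimately show ?case using elim \<psi>(2) by simp
  qed
qed

lemma subsolution_quadratic_barrier:
  assumes x0: "x0 \<in> \<Omega>" "d x0 = t0" and B: "0 < B"
    and M: "bounded_linear M" "\<And>v w. M v \<bullet> w = v \<bullet> M w"
    and barrier: "\<forall>\<^sub>F x in at x0 within \<Omega>. d x - t0 \<le> p \<bullet> (x - x0) + (x - x0) \<bullet> M (x - x0) / 2"
    and touch: "\<forall>\<^sub>F s in nhds t0. s \<in> {0..\<rho>} \<longrightarrow> f s \<le> f t0 + B * (s - t0) + C * (s - t0)\<^sup>2"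
  shows "- (2 * C * B\<^sup>2 * (p \<bullet> p)\<^sup>2 + B ^ 3 * (M p \<bullet> p)) \<le> 1"
proof -
  define \<psi> where "\<psi> x = p \<bullet> (x - x0) + (x - x0) \<bullet> M (x - x0) / 2" for x
  note test = inf_laplacian_quadratic_profile[where p=p and a=x0, OF M, folded \<psi>_def]
  have "local_min_at \<Omega> (\<lambda>x. (f t0 + B * \<psi> x + C * (\<psi> x)\<^sup>2) - u x) x0"
    using x0 B test barrier[folded \<psi>_def] touch by (intro touching_from_above) auto
  then have "- inf_laplacian (\<lambda>x. f t0 + B * \<psi> x + C * (\<psi> x)\<^sup>2) x0 \<le> 1"
    by (rule viscosity_subsolution[OF test(1) x0(1)])
  with test(4) show ?thesis by simp
qed

lemma supersolution_quadratic_barrier: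
  assumes x0: "x0 \<in> \<Omega>" "d x0 = t0" and B: "0 < B"
    and M: "bounded_linear M" "\<And>v w. M v \<bullet> w = v \<bullet> M w"
    and barrier: "\<forall>\<^sub>F x in at x0 within \<Omega>. p \<bullet> (x - x0) + (x - x0) \<bullet> M (x - x0) / 2 \<le> d x - t0"
    and touch: "\<forall>\<^sub>F s in nhds t0. s \<in> {0..\<rho>} \<longrightarrow> f t0 + B * (s - t0) + C * (s - t0)\<^sup>2 \<le> f s"
  shows "1 \<le> - (2 * C * B\<^sup>2 * (p \<bullet> p)\<^sup>2 + B ^ 3 * (M p \<bullet> p))"
proof -
  define \<psi> where "\<psi> x = p \<bullet> (x - x0) + (x - x0) \<bullet> M (x - x0) / 2" for x
  note test = inf_laplacian_quadratic_profile[where p=p and a=x0, OF M, folded \<psi>_def]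
  have "local_max_at \<Omega> (\<lambda>x. (f t0 + B * \<psi> x + C * (\<psi> x)\<^sup>2) - u x) x0"
    using x0 B test barrier[folded \<psi>_def] touch by (intro touching_from_below) auto
  then have "1 \<le> - inf_laplacian (\<lambda>x. f t0 + B * \<psi> x + C * (\<psi> x)\<^sup>2) x0"
    by (rule viscosity_supersolution[OF test(1) x0(1)])
  with test(4) show ?thesis by simp
qed

lemma profile_subsolution:
  assumes t0: "0 < t0" "t0 \<le> \<rho>" and B: "0 < B"
    and touch: "\<forall>\<^sub>F s in nhds t0. s \<in> {0..\<rho>} \<longrightarrow> f s \<le> f t0 + B * (s - t0) + C * (s - t0)\<^sup>2"
  shows "- (2 * C * B\<^sup>2) \<le> 1"
proof -
  obtain y e where y: "y \<in> frontier \<Omega>" and e: "norm e = 1"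
    and seg: "\<And>t. 0 \<le> t \<Longrightarrow> t \<le> \<rho> \<Longrightarrow> d (y + t *\<^sub>R e) = t"
      "\<And>t. 0 < t \<Longrightarrow> t \<le> \<rho> \<Longrightarrow> y + t *\<^sub>R e \<in> \<Omega>"
    using inradius_segment by metis
  define x0 where "x0 = y + t0 *\<^sub>R e"
  have x0: "x0 \<in> \<Omega>" "d x0 = t0" using seg t0 by (auto simp: x0_def)
  define M where "M v = (2 / t0) *\<^sub>R perp_proj e v" for v
  have M: "bounded_linear M" "\<And>v w. M v \<bullet> w = v \<bullet> M w"
    unfolding M_def by (rule bounded_linear_scaled_perp_proj) (simp add: perp_proj_inner_commute)
  have "\<forall>\<^sub>F x in at x0 within \<Omega>. norm (x - x0) < t0 / 2"
    using t0 by (intro eventually_at_norm_diff_less) simp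
  then have "\<forall>\<^sub>F x in at x0 within \<Omega>. d x - t0 \<le> e \<bullet> (x - x0) + (x - x0) \<bullet> M (x - x0) / 2"
  proof (rule eventually_mono)
    fix x assume "norm (x - x0) < t0 / 2"
    moreover have "y + t0 *\<^sub>R e + (x - x0) = x" by (simp add: x0_def)
    ultimately show "d x - t0 \<le> e \<bullet> (x - x0) + (x - x0) \<bullet> M (x - x0) / 2"
      using dist_bd_le_paraboloid[OF y e t0(1), of "x - x0"] by (simp add: M_def)
  qed
  from subsolution_quadratic_barrier[OF x0 B M this touch] e
  show ?thesis by (simp add: M_def perp_proj_self norm_eq_1)
qed

lemma profile_supersolution:
  assumes t0: "0 < t0" "t0 < \<rho>" and B: "0 < B"
    and touch: "\<forall>\<^sub>F s in nhds t0. s \<in> {0..\<rho>} \<longrightarrow> f t0 + B * (s - t0) + C * (s - t0)\<^sup>2 \<le> f s"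
  shows "1 \<le> - (2 * C * B\<^sup>2)"
proof -
  obtain y e where e: "norm e = 1"
    and seg: "\<And>t. 0 \<le> t \<Longrightarrow> t \<le> \<rho> \<Longrightarrow> d (y + t *\<^sub>R e) = t"
      "\<And>t. 0 < t \<Longrightarrow> t \<le> \<rho> \<Longrightarrow> y + t *\<^sub>R e \<in> \<Omega>"
    using inradius_segment by metis
  define x0 where "x0 = y + t0 *\<^sub>R e"
  define r where "r = \<rho> - t0"
  have x0: "x0 \<in> \<Omega>" "d x0 = t0" using seg t0 by (auto simp: x0_def)
  have "x0 + r *\<^sub>R e = y + \<rho> *\<^sub>R e" by (simp add: x0_def r_def algebra_simps)
  then have r: "0 < r" "d (x0 + r *\<^sub>R e) = t0 + r" using seg(1)[of \<rho>] t0 by (simp_all add: r_def)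
  define M where "M v = (- 2 / r) *\<^sub>R perp_proj e v" for v
  have M: "bounded_linear M" "\<And>v w. M v \<bullet> w = v \<bullet> M w"
    unfolding M_def by (rule bounded_linear_scaled_perp_proj) (simp add: perp_proj_inner_commute)
  have "\<forall>\<^sub>F x in at x0 within \<Omega>. norm (x - x0) < r / 2"
    using r by (intro eventually_at_norm_diff_less) simp
  then have "\<forall>\<^sub>F x in at x0 within \<Omega>. e \<bullet> (x - x0) + (x - x0) \<bullet> M (x - x0) / 2 \<le> d x - t0"
  proof (rule eventually_mono)
    fix x assume "norm (x - x0) < r / 2"
    then show "e \<bullet> (x - x0) + (x - x0) \<bullet> M (x - x0) / 2 \<le> d x - t0"
      using dist_bd_ge_paraboloid[OF e r(1), of "x - x0" x0] r(2) by (simp add: M_def)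
  qed
  from supersolution_quadratic_barrier[OF x0 B M this touch] e
  show ?thesis by (simp add: M_def perp_proj_self norm_eq_1)
qed

lemma profile_no_local_min:
  assumes t0: "0 < t0" "t0 \<le> \<rho>" and min: "\<forall>\<^sub>F s in nhds t0. s \<in> {0..\<rho>} \<longrightarrow> f t0 \<le> f s"
  shows False
proof -
  obtain y e where seg: "\<And>t. 0 \<le> t \<Longrightarrow> t \<le> \<rho> \<Longrightarrow> d (y + t *\<^sub>R e) = t"
      "\<And>t. 0 < t \<Longrightarrow> t \<le> \<rho> \<Longrightarrow> y + t *\<^sub>R e \<in> \<Omega>"
    using inradius_segment by metis
  define x0 where "x0 = y + t0 *\<^sub>R e"
  have x0: "x0 \<in> \<Omega>" "d x0 = t0" using seg t0 by (auto simp: x0_def)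
  have "u x0 = f t0" using x0 u_eq_profile closure_subset by blast
  then have "\<forall>\<^sub>F x in at x0 within \<Omega>. f t0 - u x \<le> f t0 - u x0"
    using eventually_profile[OF x0(1), of "\<lambda>s v. f t0 \<le> v"] min x0 by (auto elim!: eventually_mono)
  then have "1 \<le> - inf_laplacian (\<lambda>x. f t0) x0"
    by (intro viscosity_supersolution[OF C2_on_const x0(1)] local_max_atI)
  then show False by (simp add: inf_laplacian_const)
qed

lemma nearest_frontier_point_unique:
  assumes x: "x \<in> \<Omega>" and y1: "y1 \<in> frontier \<Omega>" "dist x y1 = d x"
    and y2: "y2 \<in> frontier \<Omega>" "dist x y2 = d x" and B: "0 < B"
    and touch: "\<forall>\<^sub>F s in nhds (d x). s \<in> {0..\<rho>} \<longrightarrow> f s \<le> f (d x) + B * (s - d x)"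
  shows "y1 = y2"
proof (rule ccontr)
  assume "y1 \<noteq> y2"
  define t where "t = d x"
  define e1 where "e1 = (1 / t) *\<^sub>R (x - y1)"
  define e2 where "e2 = (1 / t) *\<^sub>R (x - y2)"
  define v where "v = e1 - e2"
  define p where "p = (3/4) *\<^sub>R e1 + (1/4) *\<^sub>R e2"
  define Z where "Z = 2 / t * (3/4 * (perp_proj e1 p \<bullet> p) + 1/4 * (perp_proj e2 p \<bullet> p))"
  define K where "K = (\<bar>Z\<bar> + 2 / B ^ 3) / (2 * (v \<bullet> p)\<^sup>2)"
  define M where "M w = (2 / t) *\<^sub>R ((3/4) *\<^sub>R perp_proj e1 w + (1/4) *\<^sub>R perp_proj e2 w)
    - (2 * K * (v \<bullet> w)) *\<^sub>R v" for w
  have t: "0 < t" unfolding t_def by (rule dist_bd_pos[OF x])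
  have e1: "norm e1 = 1" "x = y1 + t *\<^sub>R e1" and e2: "norm e2 = 1" "x = y2 + t *\<^sub>R e2"
    using y1 y2 t unfolding e1_def e2_def t_def by (simp_all add: dist_norm)
  have "v \<noteq> 0" using \<open>y1 \<noteq> y2\<close> e1(2) e2(2) by (auto simp: v_def)
  moreover have "v \<bullet> p = (v \<bullet> v) / 4"
    using e1(1) e2(1) by (simp add: v_def p_def norm_eq_1 inner_diff_left inner_diff_right
        inner_add_right inner_commute field_simps)
  ultimately have vp: "0 < (v \<bullet> p)\<^sup>2" by (metis inner_eq_zero_iff zero_less_power2 divide_eq_0_iff
      zero_neq_numeral)
  have K: "0 < K" "2 * K * (v \<bullet> p)\<^sup>2 = \<bar>Z\<bar> + 2 / B ^ 3"
    using vp B by (simp_all add: K_def add_nonneg_pos)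
  have M: "bounded_linear M" "\<And>w w'. M w \<bullet> w' = w \<bullet> M w'"
    unfolding M_def
    by (intro bounded_linear_intros bounded_linear_perp_proj)
      (simp add: perp_proj_inner_commute inner_diff_left inner_diff_right inner_add_left inner_add_right
        inner_commute[of _ v])
  have \<psi>: "p \<bullet> w + w \<bullet> M w / 2 = 3/4 * (e1 \<bullet> w + w \<bullet> perp_proj e1 w / t)
      + 1/4 * (e2 \<bullet> w + w \<bullet> perp_proj e2 w / t) - K * ((e1 - e2) \<bullet> w)\<^sup>2" for w
    by (simp add: M_def p_def v_def inner_add_left inner_diff_left inner_diff_right
        inner_add_right inner_commute power2_eq_square field_simps)
  have "\<forall>\<^sub>F z in at x within \<Omega>. norm (z - x) < min (t / 4) (1 / (16 * K))"
    using t K by (intro eventually_at_norm_diff_less) simp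
  then have barrier: "\<forall>\<^sub>F z in at x within \<Omega>. d z - t \<le> p \<bullet> (z - x) + (z - x) \<bullet> M (z - x) / 2"
  proof (rule eventually_mono)
    fix z assume "norm (z - x) < min (t / 4) (1 / (16 * K))"
    then show "d z - t \<le> p \<bullet> (z - x) + (z - x) \<bullet> M (z - x) / 2"
      using dist_bd_le_two_paraboloids[OF y1(1) e1(2,1) y2(1) e2(2,1) t K(1), of "z - x"]
        \<psi>[of "z - x"] by simp
  qed
  have "\<forall>\<^sub>F s in nhds t. s \<in> {0..\<rho>} \<longrightarrow> f s \<le> f t + B * (s - t) + 0 * (s - t)\<^sup>2"
    using touch by (simp add: t_def)
  from subsolution_quadratic_barrier[OF x t_def[symmetric] B M barrier this]
  have "- (B ^ 3 * (M p \<bullet> p)) \<le> 1" by simp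
  moreover have "M p \<bullet> p = Z - 2 * K * (v \<bullet> p)\<^sup>2"
    by (simp add: M_def Z_def inner_diff_left inner_add_left power2_eq_square)
  moreover have "B ^ 3 * (2 * K * (v \<bullet> p)\<^sup>2) = B ^ 3 * \<bar>Z\<bar> + 2" using K(2) B by (simp add: distrib_left)
  moreover have "B ^ 3 * Z \<le> B ^ 3 * \<bar>Z\<bar>" using B by (intro mult_left_mono) auto
  ultimately show False by (simp add: right_diff_distrib)
qed

lemma singular_set_subset_high_ridge:
  assumes profile: "\<And>s. s \<in> {0..\<rho>} \<Longrightarrow> f s = barrier 1 \<rho> s"
  shows "singular_set \<Omega> \<subseteq> high_ridge \<Omega>"
proof
  fix x assume "x \<in> singular_set \<Omega>"
  then have x: "x \<in> \<Omega>" and singular: "\<not> d differentiable (at x)" by (auto simp: singular_set_def)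
  have xc: "x \<in> closure \<Omega>" using x closure_subset by blast
  have "d x = \<rho>"
  proof (rule ccontr)
    assume "d x \<noteq> \<rho>"
    define t where "t = d x"
    have t: "0 < t" "t < \<rho>"
      using dist_bd_pos[OF x] dist_bd_le_inradius[OF xc] \<open>d x \<noteq> \<rho>\<close> by (auto simp: t_def)
    obtain y where y: "y \<in> frontier \<Omega>" "dist x y = d x" using nearest_frontier_point by metis
    \<comment> \<open>the concave profile lies below its tangent at \<open>t\<close>\<close>
    have "\<forall>\<^sub>F s in nhds t. barrier 1 \<rho> s \<le> barrier 1 \<rho> t + barrier_deriv 1 \<rho> t * (s - t)
        + (barrier_deriv2 1 \<rho> t + - barrier_deriv2 1 \<rho> t) / 2 * (s - t)\<^sup>2"
      using t barrier_deriv2_neg[of t \<rho> 1]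
      by (intro second_order_upper_bound eventually_barrier_has_derivative barrier_deriv_has_derivative) auto
    then have "\<forall>\<^sub>F s in nhds t. s \<in> {0..\<rho>} \<longrightarrow> f s \<le> f t + barrier_deriv 1 \<rho> t * (s - t)"
      by (rule eventually_mono) (use profile t in auto)
    then have "y' = y" if "y' \<in> frontier \<Omega>" "dist x y' = d x" for y'
      using nearest_frontier_point_unique[OF x that y] barrier_deriv_pos[of t \<rho> 1] t by (simp add: t_def)
    then have "d differentiable (at x)"
      using dist_bd_has_derivative_if_unique_nearest[OF x y] by (auto simp: differentiable_def)
    with singular show False ..
  qed
  with xc show "x \<in> high_ridge \<Omega>" by (simp add: high_ridge_def)
qed

end

theorem theorem13:
  fixes \<Omega> :: "'a::euclidean_space set" and u :: "'a \<Rightarrow> real"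
  assumes "open \<Omega>" and "bounded \<Omega>" and "connected \<Omega>" and "\<Omega> \<noteq> {}"
    and "web_function \<Omega> u" and "viscosity_solution \<Omega> u"
  shows "(\<forall>x\<in>closure \<Omega>. u x = phi_Omega \<Omega> x) \<and> cut_locus \<Omega> = high_ridge \<Omega>"
proof -
  interpret bounded_domain \<Omega> using assms by unfold_locales
  obtain f where f: "continuous_on {0..\<rho>} f" "\<And>x. x \<in> closure \<Omega> \<Longrightarrow> u x = f (d x)"
    using assms(5) unfolding web_function_def by blast
  interpret web_solution \<Omega> u f using f(2) assms(6) by unfold_locales
  interpret profile: profile_solution f \<rho>
    using inradius_pos f(1) profile_zero profile_subsolution profile_supersolution profile_no_local_min
    by unfold_locales
  have "u x = phi_Omega \<Omega> x" if "x \<in> closure \<Omega>" for x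
    using f(2)[OF that] profile.profile_eq_barrier[of "d x"] dist_bd_nonneg dist_bd_le_inradius[OF that]
    by (simp add: barrier_def c0_def phi_Omega_def)
  moreover have "cut_locus \<Omega> = high_ridge \<Omega>"
    using cut_locus_eq_high_ridge singular_set_subset_high_ridge profile.profile_eq_barrier by blast
  ultimately show ?thesis by blast
qed

end
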